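(* For $k\in\mathbb{Z}/(l+1)\mathbb{Z}$ and $0\le r\le l-1$, define $g_{k,r}=s_{k+r}s_{k+r-1}\cdots s_{k+1}\big(\alpha_k/f_k\big)$ (with $g_{k,0}=\alpha_k/f_k$). Then $g_{k,r}$ equals the continued fraction $$g_{k,r}=\cfrac{\alpha_k+\alpha_{k+1}+\cdots+\alpha_{k+r}}{f_k-\cfrac{\alpha_{k+1}+\cdots+\alpha_{k+r}}{f_{k+1}-\cfrac{\ddots}{\ddots-\cfrac{\alpha_{k+r}}{f_{k+r}}}}}.$$ Moreover the translation $T_1=\pi s_ls_{l-1}\cdots s_1$ acts by $$T_1(f_0)=f_1-g_{2,l-1}+g_{0,0},\qquad T_1(f_1)=f_2-g_{3,l-2},$$ $$T_1(f_j)=f_{j+1}-g_{j+2,\,l-1-j}+g_{j,\,l+1-j}\quad(2\le j\le l-1),\qquad T_1(f_l)=f_0+g_{l,1},$$ and $T_1(\alpha_0)=\alpha_0+\delta$, $T_1(\alpha_1)=\alpha_1-\delta$, $T_1(\alpha_j)=\alpha_j$ for $j\neq0,1$.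
   Context: Let $l\ge2$ and index by $\mathbb{Z}/(l+1)\mathbb{Z}$. Let $\mathbb{C}(\alpha;f)$ be the field of rational functions over $\mathbb{C}$ in independent variables $\alpha_0,\dots,\alpha_l,f_0,\dots,f_l$, and set $\delta=\alpha_0+\cdots+\alpha_l$. For each $i$, $s_i$ is the field automorphism with $s_i(\alpha_i)=-\alpha_i$, $s_i(\alpha_{i\pm1})=\alpha_{i\pm1}+\alpha_i$, $s_i(\alpha_j)=\alpha_j$ for $j\ne i,i\pm1$, $s_i(f_i)=f_i$, $s_i(f_{i+1})=f_{i+1}+\alpha_i/f_i$, $s_i(f_{i-1})=f_{i-1}-\alpha_i/f_i$, $s_i(f_j)=f_j$ for $j\neq i,i\pm1$; and $\pi$ is the automorphism with $\pi(\alpha_j)=\alpha_{j+1}$, $\pi(f_j)=f_{j+1}$. Products of automorphisms are compositions, $(gh)(x)=g(h(x))$. *)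

theory Defs
  imports Complex_Main "HOL-Library.Poly_Mapping" "HOL-Library.Product_Lexorder"
    "HOL-Computational_Algebra.Fraction_Field"
begin

text \<open>Variables: (False, j) stands for alpha_j and (True, j) for f_j.
  Polynomials over C in these variables are finitely supported maps from
  monomials (exponent vectors) to coefficients; rf is their fraction field,
  i.e. the field of rational functions C(alpha; f) (with index j in 0..l
  used; variables with j > l are fixed by all automorphisms below).\<close>

type_synonym var = "bool \<times> nat"
type_synonym mpoly = "(var \<Rightarrow>\<^sub>0 nat) \<Rightarrow>\<^sub>0 complex"
type_synonym rf = "mpoly fract"

definition rvar :: "var \<Rightarrow> rf" where
  "rvar v = Fract (Poly_Mapping.single (Poly_Mapping.single v 1) 1) 1"

definition rconst :: "complex \<Rightarrow> rf" where
  "rconst c = Fract (Poly_Mapping.single 0 c) 1"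

definition peval :: "(var \<Rightarrow> rf) \<Rightarrow> mpoly \<Rightarrow> rf" where
  "peval \<sigma> p = (\<Sum>m\<in>Poly_Mapping.keys p. rconst (Poly_Mapping.lookup p m) *
     (\<Prod>v\<in>Poly_Mapping.keys (m :: var \<Rightarrow>\<^sub>0 nat). \<sigma> v ^ Poly_Mapping.lookup m v))"

text \<open>The C-algebra endomorphism of the rational function field determined by the
  images of the variables (well defined for the automorphisms considered here).\<close>
definition subst :: "(var \<Rightarrow> rf) \<Rightarrow> rf \<Rightarrow> rf" where
  "subst \<sigma> x = (SOME y. \<exists>a b. b \<noteq> 0 \<and> x = Fract a b \<and> y = peval \<sigma> a / peval \<sigma> b)"

definition alph :: "nat \<Rightarrow> nat \<Rightarrow> rf" where
  "alph l j = rvar (False, j mod (l + 1))"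

definition fv :: "nat \<Rightarrow> nat \<Rightarrow> rf" where
  "fv l j = rvar (True, j mod (l + 1))"

definition delta :: "nat \<Rightarrow> rf" where
  "delta l = (\<Sum>j\<le>l. alph l j)"

definition s_gen :: "nat \<Rightarrow> nat \<Rightarrow> var \<Rightarrow> rf" where
  "s_gen l i v = (case v of
      (False, j) \<Rightarrow>
        if l < j then rvar v
        else if j = i mod (l + 1) then - alph l i
        else if j = (i + 1) mod (l + 1) \<or> j = (i + l) mod (l + 1) then alph l j + alph l i
        else alph l j
    | (True, j) \<Rightarrow>
        if l < j then rvar v
        else if j = (i + 1) mod (l + 1) then fv l j + alph l i / fv l i
        else if j = (i + l) mod (l + 1) then fv l j - alph l i / fv l i
        else fv l j)"

definition pi_gen :: "nat \<Rightarrow> var \<Rightarrow> rf" where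
  "pi_gen l v = (case v of (b, j) \<Rightarrow>
      if l < j then rvar v else rvar (b, (j + 1) mod (l + 1)))"

definition s_aut :: "nat \<Rightarrow> nat \<Rightarrow> rf \<Rightarrow> rf" where
  "s_aut l i = subst (s_gen l i)"

definition pi_aut :: "nat \<Rightarrow> rf \<Rightarrow> rf" where
  "pi_aut l = subst (pi_gen l)"

text \<open>chain l k r = s_{k+r} o s_{k+r-1} o ... o s_{k+1}  (identity for r = 0).\<close>
fun chain :: "nat \<Rightarrow> nat \<Rightarrow> nat \<Rightarrow> rf \<Rightarrow> rf" where
  "chain l k 0 = id"
| "chain l k (Suc r) = s_aut l (k + Suc r) \<circ> chain l k r"

definition g :: "nat \<Rightarrow> nat \<Rightarrow> nat \<Rightarrow> rf" where
  "g l k r = chain l k r (alph l k / fv l k)"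

fun cf :: "nat \<Rightarrow> nat \<Rightarrow> nat \<Rightarrow> rf" where
  "cf l k 0 = alph l k / fv l k"
| "cf l k (Suc r) = (\<Sum>i\<le>Suc r. alph l (k + i)) / (fv l k - cf l (k + 1) r)"

definition T1 :: "nat \<Rightarrow> rf \<Rightarrow> rf" where
  "T1 l = pi_aut l \<circ> chain l 0 l"

end

theory Submission
  imports Defs
begin

(* The maps s_i and pi are substitutions of the variables, extended to quotients of polynomials.
  Such a substitution is a well-defined field endomorphism as soon as it sends no nonzero
  polynomial to zero, and this holds for s_i and pi because each has a left inverse (s_i itself,
  respectively the inverse shift) defined on the fractions whose denominator is a power of a
  single variable (f_i, respectively a variable outside the range 0..l).

  Once all maps are field homomorphisms, everything reduces to their action on generators.
  Applying s_{k+r+1} to the continued fraction of depth r only changes its innermost level,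
  turning alpha_{k+r} into alpha_{k+r} + alpha_{k+r+1} and f_{k+r} into
  f_{k+r} - alpha_{k+r+1}/f_{k+r+1}, which gives the continued fraction of depth r+1.
  In T_1 = pi s_l ... s_1 the variable f_j is first moved by s_{j-1}, which adds
  alpha_{j-1}/f_{j-1}, turned by s_j, ..., s_l into g_{j-1,l-j+1}; then by s_{j+1}, which
  subtracts alpha_{j+1}/f_{j+1}, turned by the remaining s's into g_{j+1,l-j-1}; finally pi
  shifts every index by one. *)

lemma rconst_add: "rconst (a + b) = rconst a + rconst b"
  by (simp add: rconst_def single_add)

lemma rconst_mult: "rconst (a * b) = rconst a * rconst b"
  by (simp add: rconst_def mult_single)

lemma rconst_0 [simp]: "rconst 0 = 0"
  by (simp add: rconst_def Zero_fract_def)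

lemma rconst_1 [simp]: "rconst 1 = 1"
  by (simp add: rconst_def One_fract_def)

lemma poly_mapping_single_add_induct [case_names zero single add]:
  fixes p :: "'a \<Rightarrow>\<^sub>0 'b::comm_monoid_add"
  assumes "P 0" and "\<And>a b. P (Poly_Mapping.single a b)" and "\<And>p q. P p \<Longrightarrow> P q \<Longrightarrow> P (p + q)"
  shows "P p"
proof (induction p rule: update_induct)
  case const
  show ?case by fact
next
  case (update p a b)
  then have "Poly_Mapping.update a b p = p + Poly_Mapping.single a b"
    by (intro poly_mapping_eqI)
       (auto simp: lookup_update lookup_add lookup_single in_keys_iff when_def)
  with assms(2,3) update.IH show ?case
    by simp
qed

abbreviation poly_fract :: "mpoly \<Rightarrow> rf" where
  "poly_fract p \<equiv> Fract p 1"

definition pvar :: "var \<Rightarrow> mpoly" where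
  "pvar v = Poly_Mapping.single (Poly_Mapping.single v 1) 1"

definition monom_eval :: "(var \<Rightarrow> rf) \<Rightarrow> (var \<Rightarrow>\<^sub>0 nat) \<Rightarrow> rf" where
  "monom_eval \<sigma> m = (\<Prod>v\<in>Poly_Mapping.keys m. \<sigma> v ^ Poly_Mapping.lookup m v)"

lemma peval_superset:
  assumes "finite S" and "Poly_Mapping.keys p \<subseteq> S"
  shows "peval \<sigma> p = (\<Sum>m\<in>S. rconst (Poly_Mapping.lookup p m) * monom_eval \<sigma> m)"
  unfolding peval_def monom_eval_def
  by (rule sum.mono_neutral_left) (use assms in \<open>auto simp: in_keys_iff\<close>)

lemma monom_eval_superset:
  assumes "finite S" and "Poly_Mapping.keys m \<subseteq> S"
  shows "monom_eval \<sigma> m = (\<Prod>v\<in>S. \<sigma> v ^ Poly_Mapping.lookup m v)"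
  unfolding monom_eval_def
  by (rule prod.mono_neutral_left) (use assms in \<open>auto simp: in_keys_iff\<close>)

lemma peval_0 [simp]: "peval \<sigma> 0 = 0"
  by (simp add: peval_def)

lemma peval_add: "peval \<sigma> (p + q) = peval \<sigma> p + peval \<sigma> q"
proof -
  let ?S = "Poly_Mapping.keys p \<union> Poly_Mapping.keys q"
  have "Poly_Mapping.keys (p + q) \<subseteq> ?S"
    by (auto simp: in_keys_iff lookup_add)
  then show ?thesis
    by (simp add: peval_superset[of ?S] lookup_add rconst_add distrib_right sum.distrib)
qed

lemma peval_single: "peval \<sigma> (Poly_Mapping.single m c) = rconst c * monom_eval \<sigma> m"
  by (simp add: peval_superset[of "{m}"])

lemma monom_eval_0 [simp]: "monom_eval \<sigma> 0 = 1"
  by (simp add: monom_eval_def)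

lemma monom_eval_add: "monom_eval \<sigma> (m + n) = monom_eval \<sigma> m * monom_eval \<sigma> n"
proof -
  let ?S = "Poly_Mapping.keys m \<union> Poly_Mapping.keys n"
  have "Poly_Mapping.keys (m + n) \<subseteq> ?S"
    by (auto simp: in_keys_iff lookup_add)
  then show ?thesis
    by (simp add: monom_eval_superset[of ?S] lookup_add power_add prod.distrib)
qed

lemma monom_eval_single: "monom_eval \<sigma> (Poly_Mapping.single v e) = \<sigma> v ^ e"
  by (simp add: monom_eval_superset[of "{v}"])

lemma peval_mult: "peval \<sigma> (p * q) = peval \<sigma> p * peval \<sigma> q"
proof (induction p rule: poly_mapping_single_add_induct)
  case (single m c)
  show ?case
    by (induction q rule: poly_mapping_single_add_induct)
       (simp_all add: mult_single peval_single monom_eval_add rconst_mult peval_add distrib_left)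
qed (simp_all add: peval_add distrib_right)

lemma peval_1 [simp]: "peval \<sigma> 1 = 1"
  using peval_single[of \<sigma> 0 1] by simp

lemma peval_uminus: "peval \<sigma> (- p) = - peval \<sigma> p"
  using peval_add[of \<sigma> "- p" p] by (simp add: eq_neg_iff_add_eq_0)

lemma peval_power: "peval \<sigma> (p ^ n) = peval \<sigma> p ^ n"
  by (induction n) (simp_all add: peval_mult)

lemma peval_pvar [simp]: "peval \<sigma> (pvar v) = \<sigma> v"
  by (simp add: pvar_def peval_single monom_eval_single)

lemma pvar_nonzero [simp]: "pvar v \<noteq> 0"
  by (metis lookup_single_eq one_neq_zero lookup_zero pvar_def)

lemma rvar_eq_poly_fract: "rvar v = poly_fract (pvar v)"
  by (simp add: rvar_def pvar_def)

lemma poly_fract_eq_0_iff [simp]: "poly_fract p = 0 \<longleftrightarrow> p = 0"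
  by (simp add: Zero_fract_def eq_fract)

lemma poly_fract_power: "poly_fract (p ^ n) = poly_fract p ^ n"
proof (induction n)
  case (Suc n)
  have "poly_fract (p * p ^ n) = poly_fract p * poly_fract (p ^ n)"
    by simp
  with Suc.IH show ?case
    by simp
qed (simp add: One_fract_def)

lemma rvar_nonzero [simp]: "rvar v \<noteq> 0"
  by (simp add: rvar_eq_poly_fract)

lemma pvar_power: "pvar v ^ e = Poly_Mapping.single (Poly_Mapping.single v e) 1"
  by (induction e) (simp_all add: pvar_def mult_single single_add[symmetric])

lemma poly_fract_monomial: "poly_fract (Poly_Mapping.single m 1) = monom_eval rvar m"
proof (induction m rule: poly_mapping_single_add_induct)
  case (single v e)
  show ?case
    by (simp add: monom_eval_single rvar_eq_poly_fract pvar_power[symmetric] poly_fract_power)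
next
  case (add m n)
  have "poly_fract (Poly_Mapping.single (m + n) 1) =
      poly_fract (Poly_Mapping.single m 1) * poly_fract (Poly_Mapping.single n 1)"
    by (simp add: mult_single)
  with add.IH show ?case
    by (simp only: monom_eval_add)
qed (simp add: One_fract_def)

lemma peval_rvar: "peval rvar p = poly_fract p"
proof (induction p rule: poly_mapping_single_add_induct)
  case (single m c)
  have "peval rvar (Poly_Mapping.single m c) = rconst c * poly_fract (Poly_Mapping.single m 1)"
    by (simp add: peval_single poly_fract_monomial)
  also have "\<dots> = poly_fract (Poly_Mapping.single m c)"
    by (simp add: rconst_def mult_single)
  finally show ?case .
qed (simp_all add: peval_add)

section \<open>Substitution homomorphisms\<close>

definition field_hom :: "('a::field \<Rightarrow> 'b::field) \<Rightarrow> bool" where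
  "field_hom h \<longleftrightarrow> (\<forall>x y. h (x + y) = h x + h y) \<and> (\<forall>x y. h (x * y) = h x * h y) \<and> h 1 = 1"

lemma field_hom_add: "field_hom h \<Longrightarrow> h (x + y) = h x + h y"
  and field_hom_mult: "field_hom h \<Longrightarrow> h (x * y) = h x * h y"
  and field_hom_1: "field_hom h \<Longrightarrow> h 1 = 1"
  by (simp_all add: field_hom_def)

lemma field_hom_0: "field_hom h \<Longrightarrow> h 0 = 0"
  using field_hom_add[of h 0 0] by (metis add_cancel_right_right add_0)

lemma field_hom_uminus: "field_hom h \<Longrightarrow> h (- x) = - h x"
  using field_hom_add[of h x "- x"] field_hom_0[of h] by (simp add: eq_neg_iff_add_eq_0 add.commute)

lemma field_hom_diff: "field_hom h \<Longrightarrow> h (x - y) = h x - h y"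
  using field_hom_add[of h x "- y"] field_hom_uminus[of h y] by simp

lemma field_hom_inverse: "field_hom h \<Longrightarrow> h (inverse x) = inverse (h x)"
proof (cases "x = 0")
  case False
  assume "field_hom h"
  then have "h x * h (inverse x) = 1"
    using False by (metis field_hom_1 field_hom_mult right_inverse)
  then show ?thesis
    by (rule inverse_unique[symmetric])
qed (simp add: field_hom_0)

lemma field_hom_divide: "field_hom h \<Longrightarrow> h (x / y) = h x / h y"
  by (simp add: divide_inverse field_hom_mult field_hom_inverse)

lemma field_hom_sum: "field_hom h \<Longrightarrow> h (\<Sum>i\<in>A. f i) = (\<Sum>i\<in>A. h (f i))"
  by (induction A rule: infinite_finite_induct) (simp_all add: field_hom_0 field_hom_add)

lemma field_hom_id: "field_hom id"
  and field_hom_comp: "field_hom h \<Longrightarrow> field_hom k \<Longrightarrow> field_hom (h \<circ> k)"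
  by (simp_all add: field_hom_def)

definition nonsingular :: "(var \<Rightarrow> rf) \<Rightarrow> bool" where
  "nonsingular \<sigma> \<longleftrightarrow> (\<forall>p. p \<noteq> 0 \<longrightarrow> peval \<sigma> p \<noteq> 0)"

lemma subst_Fract:
  assumes "nonsingular \<sigma>" and "q \<noteq> 0"
  shows "subst \<sigma> (Fract p q) = peval \<sigma> p / peval \<sigma> q"
  unfolding subst_def
proof (rule some_equality)
  fix y
  assume "\<exists>p' q'. q' \<noteq> 0 \<and> Fract p q = Fract p' q' \<and> y = peval \<sigma> p' / peval \<sigma> q'"
  then obtain p' q' where "q' \<noteq> 0" "Fract p q = Fract p' q'" "y = peval \<sigma> p' / peval \<sigma> q'"
    by blast
  moreover from this assms have "peval \<sigma> p * peval \<sigma> q' = peval \<sigma> p' * peval \<sigma> q"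
    by (metis eq_fract(1) peval_mult)
  ultimately show "y = peval \<sigma> p / peval \<sigma> q"
    using assms by (simp add: frac_eq_eq nonsingular_def)
qed (use assms in blast)

lemma field_hom_subst: "nonsingular \<sigma> \<Longrightarrow> field_hom (subst \<sigma>)"
proof -
  assume nonsing: "nonsingular \<sigma>"
  have "subst \<sigma> (x + y) = subst \<sigma> x + subst \<sigma> y \<and> subst \<sigma> (x * y) = subst \<sigma> x * subst \<sigma> y"
    for x y
  proof (cases x, cases y)
    fix p q p' q'
    assume "x = Fract p q" "q \<noteq> 0" "y = Fract p' q'" "q' \<noteq> 0"
    moreover from this nonsing have "peval \<sigma> q \<noteq> 0" "peval \<sigma> q' \<noteq> 0"
      by (simp_all add: nonsingular_def)
    ultimately show ?thesis
      using nonsing by (simp add: subst_Fract peval_add peval_mult field_simps)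
  qed
  moreover have "subst \<sigma> 1 = 1"
    by (simp add: One_fract_def subst_Fract nonsing)
  ultimately show ?thesis
    by (simp add: field_hom_def)
qed

lemma subst_rvar: "nonsingular \<sigma> \<Longrightarrow> subst \<sigma> (rvar v) = \<sigma> v"
  by (simp add: rvar_eq_poly_fract subst_Fract)

section \<open>Localisation at a single variable\<close>

lemma peval_hom_commute:
  assumes hom_add: "\<And>x y. x \<in> S \<Longrightarrow> y \<in> S \<Longrightarrow> x + y \<in> S \<and> h (x + y) = h x + h y"
    and hom_mult: "\<And>x y. x \<in> S \<Longrightarrow> y \<in> S \<Longrightarrow> x * y \<in> S \<and> h (x * y) = h x * h y"
    and hom_const: "\<And>c. rconst c \<in> S \<and> h (rconst c) = rconst c"
    and vars_in: "\<And>v. \<sigma> v \<in> S"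
  shows "peval \<sigma> p \<in> S \<and> h (peval \<sigma> p) = peval (h \<circ> \<sigma>) p"
proof (induction p rule: poly_mapping_single_add_induct)
  case zero
  show ?case
    using hom_const[of 0] by simp
next
  case (single m c)
  have "\<sigma> v ^ e \<in> S \<and> h (\<sigma> v ^ e) = h (\<sigma> v) ^ e" for v e
    by (induction e) (use hom_const[of 1] hom_mult vars_in in auto)
  then have "monom_eval \<sigma> m \<in> S \<and> h (monom_eval \<sigma> m) = monom_eval (h \<circ> \<sigma>) m"
    by (induction m rule: poly_mapping_single_add_induct)
       (use hom_const[of 1] hom_mult in \<open>auto simp: monom_eval_single monom_eval_add\<close>)
  then show ?case
    using hom_mult hom_const by (simp add: peval_single comp_def)
next
  case (add p q)
  then show ?case
    using hom_add by (simp add: peval_add)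
qed

definition loc :: "var \<Rightarrow> rf set" where
  "loc w = {Fract p (pvar w ^ n) | p n. True}"

definition loc_eval :: "(var \<Rightarrow> rf) \<Rightarrow> var \<Rightarrow> rf \<Rightarrow> rf" where
  "loc_eval \<tau> w x = (SOME y. \<exists>p n. x = Fract p (pvar w ^ n) \<and> y = peval \<tau> p / \<tau> w ^ n)"

lemma poly_fract_in_loc: "poly_fract p \<in> loc w"
  unfolding loc_def by (metis (mono_tags) mem_Collect_eq power_0)

lemma rvar_in_loc: "rvar u \<in> loc w"
  by (simp add: rvar_eq_poly_fract poly_fract_in_loc)

lemma loc_add: "x \<in> loc w \<Longrightarrow> y \<in> loc w \<Longrightarrow> x + y \<in> loc w"
  by (clarsimp simp: loc_def simp del: eq_fract) (metis add_fract power_add pvar_nonzero power_not_zero)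

lemma loc_mult: "x \<in> loc w \<Longrightarrow> y \<in> loc w \<Longrightarrow> x * y \<in> loc w"
  by (clarsimp simp: loc_def simp del: eq_fract) (metis power_add)

lemma loc_uminus: "x \<in> loc w \<Longrightarrow> - x \<in> loc w"
  unfolding loc_def by (force simp del: eq_fract)

lemma loc_divide_rvar: "x \<in> loc w \<Longrightarrow> x / rvar w \<in> loc w"
  by (clarsimp simp: loc_def rvar_eq_poly_fract simp del: eq_fract) (metis power_Suc2)

lemma loc_diff: "x \<in> loc w \<Longrightarrow> y \<in> loc w \<Longrightarrow> x - y \<in> loc w"
  by (metis diff_conv_add_uminus loc_add loc_uminus)

context
  fixes \<tau> :: "var \<Rightarrow> rf" and w :: var
  assumes image_nonzero: "\<tau> w \<noteq> 0"
begin

lemma loc_eval_Fract: "loc_eval \<tau> w (Fract p (pvar w ^ n)) = peval \<tau> p / \<tau> w ^ n"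
  unfolding loc_eval_def
proof (rule some_equality)
  fix y
  assume "\<exists>q m. Fract p (pvar w ^ n) = Fract q (pvar w ^ m) \<and> y = peval \<tau> q / \<tau> w ^ m"
  then obtain q m where "Fract p (pvar w ^ n) = Fract q (pvar w ^ m)" "y = peval \<tau> q / \<tau> w ^ m"
    by blast
  moreover from this have "peval \<tau> p * \<tau> w ^ m = peval \<tau> q * \<tau> w ^ n"
    by (metis eq_fract(1) peval_mult peval_power peval_pvar power_not_zero pvar_nonzero)
  ultimately show "y = peval \<tau> p / \<tau> w ^ n"
    using image_nonzero by (simp add: frac_eq_eq)
qed blast

lemma loc_eval_poly_fract: "loc_eval \<tau> w (poly_fract p) = peval \<tau> p"
  using loc_eval_Fract[of p 0] by simp

lemma loc_eval_rvar: "loc_eval \<tau> w (rvar u) = \<tau> u"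
  by (simp add: rvar_eq_poly_fract loc_eval_poly_fract)

lemma loc_eval_add:
  assumes "x \<in> loc w" and "y \<in> loc w"
  shows "loc_eval \<tau> w (x + y) = loc_eval \<tau> w x + loc_eval \<tau> w y"
proof -
  obtain p n q m where x: "x = Fract p (pvar w ^ n)" and y: "y = Fract q (pvar w ^ m)"
    using assms by (auto simp: loc_def)
  then have "x + y = Fract (p * pvar w ^ m + q * pvar w ^ n) (pvar w ^ (n + m))"
    by (simp add: power_add)
  then have "loc_eval \<tau> w (x + y) = peval \<tau> (p * pvar w ^ m + q * pvar w ^ n) / \<tau> w ^ (n + m)"
    by (simp only: loc_eval_Fract)
  also have "\<dots> = loc_eval \<tau> w x + loc_eval \<tau> w y"
    using image_nonzero
    by (simp add: x y loc_eval_Fract peval_add peval_mult peval_power power_add field_simps)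
  finally show ?thesis .
qed

lemma loc_eval_mult:
  assumes "x \<in> loc w" and "y \<in> loc w"
  shows "loc_eval \<tau> w (x * y) = loc_eval \<tau> w x * loc_eval \<tau> w y"
proof -
  obtain p n q m where x: "x = Fract p (pvar w ^ n)" and y: "y = Fract q (pvar w ^ m)"
    using assms by (auto simp: loc_def)
  then have "x * y = Fract (p * q) (pvar w ^ (n + m))"
    by (simp add: power_add)
  then show ?thesis
    by (simp only: x y loc_eval_Fract) (simp add: peval_mult power_add)
qed

lemma loc_eval_uminus: "x \<in> loc w \<Longrightarrow> loc_eval \<tau> w (- x) = - loc_eval \<tau> w x"
  by (clarsimp simp: loc_def loc_eval_Fract peval_uminus simp del: eq_fract)

lemma loc_eval_diff:
  "x \<in> loc w \<Longrightarrow> y \<in> loc w \<Longrightarrow> loc_eval \<tau> w (x - y) = loc_eval \<tau> w x - loc_eval \<tau> w y"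
  by (simp only: diff_conv_add_uminus loc_eval_add loc_eval_uminus loc_uminus)

lemma loc_eval_divide_rvar:
  assumes "x \<in> loc w"
  shows "loc_eval \<tau> w (x / rvar w) = loc_eval \<tau> w x / \<tau> w"
proof -
  obtain p n where x: "x = Fract p (pvar w ^ n)"
    using assms by (auto simp: loc_def)
  then have "x / rvar w = Fract p (pvar w ^ Suc n)"
    by (simp add: rvar_eq_poly_fract mult.commute)
  then show ?thesis
    by (simp only: x loc_eval_Fract) (simp add: field_simps)
qed

lemma loc_eval_peval:
  assumes "\<And>v. \<sigma> v \<in> loc w"
  shows "peval \<sigma> p \<in> loc w \<and> loc_eval \<tau> w (peval \<sigma> p) = peval (loc_eval \<tau> w \<circ> \<sigma>) p"
proof (rule peval_hom_commute)
  show "rconst c \<in> loc w \<and> loc_eval \<tau> w (rconst c) = rconst c" for c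
    using poly_fract_in_loc loc_eval_poly_fract[of "Poly_Mapping.single 0 c"]
    by (simp add: rconst_def peval_single)
qed (simp_all add: assms loc_add loc_mult loc_eval_add loc_eval_mult)

end

lemma nonsingular_if_loc_left_inverse:
  assumes "\<tau> w \<noteq> 0" and "\<And>v. \<sigma> v \<in> loc w" and "\<And>v. loc_eval \<tau> w (\<sigma> v) = rvar v"
  shows "nonsingular \<sigma>"
  unfolding nonsingular_def
proof (intro allI impI notI)
  fix p :: mpoly
  assume "p \<noteq> 0" and "peval \<sigma> p = 0"
  have "poly_fract p = peval (loc_eval \<tau> w \<circ> \<sigma>) p"
    by (simp add: assms(3) comp_def peval_rvar)
  also have "\<dots> = loc_eval \<tau> w (peval \<sigma> p)"
    using loc_eval_peval[of \<tau> w \<sigma> p] assms(1,2) by simp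
  also have "\<dots> = 0"
    using loc_eval_poly_fract[of \<tau> w 0] assms(1) \<open>peval \<sigma> p = 0\<close> by (simp add: Zero_fract_def)
  finally show False
    using \<open>p \<noteq> 0\<close> by simp
qed

lemma mod_Suc_offset_eq_iff:
  assumes "a \<le> l" and "b \<le> l"
  shows "(k + b) mod Suc l = (k + a) mod Suc l \<longleftrightarrow> b = a"
proof -
  have "(k + x) mod Suc l \<noteq> (k + y) mod Suc l" if "x < y" and "y \<le> l" for x y
  proof
    assume "(k + x) mod Suc l = (k + y) mod Suc l"
    then have "Suc l dvd y - x"
      using mod_eq_dvd_iff_nat[of "k + x" "k + y" "Suc l"] that by simp
    with that show False
      by (simp add: nat_dvd_not_less)
  qed
  with assms show ?thesis
    by (metis linorder_neqE_nat)
qed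

lemma mod_Suc_offset_Suc_iff:
  assumes "a \<le> l" and "b \<le> l"
  shows "(k + b) mod Suc l = (k + a + 1) mod Suc l \<longleftrightarrow> b = a + 1 \<or> (a = l \<and> b = 0)"
proof (cases "a = l")
  case True
  then have "(k + a + 1) mod Suc l = (k + 0) mod Suc l"
    by (metis add.right_neutral add_Suc_right mod_add_self2 Suc_eq_plus1)
  with True assms show ?thesis
    using mod_Suc_offset_eq_iff[of 0 l b k] by simp
next
  case False
  with assms show ?thesis
    using mod_Suc_offset_eq_iff[of "a + 1" l b k] by (simp add: add.assoc)
qed

lemma mod_Suc_offset_pred_iff:
  assumes "a \<le> l" and "b \<le> l"
  shows "(k + b) mod Suc l = (k + a + l) mod Suc l \<longleftrightarrow> b + 1 = a \<or> (a = 0 \<and> b = l)"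
proof (cases a)
  case 0
  with assms show ?thesis
    using mod_Suc_offset_eq_iff[of l l b k] by simp
next
  case (Suc a')
  then have "(k + a + l) mod Suc l = (k + a') mod Suc l"
    by (metis add.assoc add_Suc_right add_Suc_shift mod_add_self2)
  with Suc assms show ?thesis
    using mod_Suc_offset_eq_iff[of a' l b k] by simp
qed

lemma alph_mod [simp]: "alph l (j mod Suc l) = alph l j"
  and fv_mod [simp]: "fv l (j mod Suc l) = fv l j"
  by (simp_all add: alph_def fv_def)

lemma not_less_mod_Suc [simp]: "\<not> l < j mod Suc l"
  by (simp add: leD)

lemma s_gen_nonsingular:
  assumes "2 \<le> l"
  shows "nonsingular (s_gen l i)"
proof -
  let ?w = "(True, i mod Suc l)"
  have distinct: "Suc i mod Suc l \<noteq> i mod Suc l" "(i + l) mod Suc l \<noteq> i mod Suc l"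
    "(i + l) mod Suc l \<noteq> Suc i mod Suc l"
    using assms mod_Suc_offset_eq_iff[of 0 l 1 i] mod_Suc_offset_eq_iff[of 0 l l i]
      mod_Suc_offset_eq_iff[of 1 l l i]
    by simp_all
  then have nonzero: "s_gen l i ?w \<noteq> 0"
    by (simp add: s_gen_def fv_def)
  show ?thesis
  proof (rule nonsingular_if_loc_left_inverse[where \<tau> = "s_gen l i" and w = ?w])
    show "s_gen l i ?w \<noteq> 0"
      by (fact nonzero)
    show "s_gen l i v \<in> loc ?w" for v
      by (auto simp: s_gen_def alph_def fv_def rvar_in_loc loc_add loc_diff loc_uminus
          loc_divide_rvar split: prod.split bool.split)
    show "loc_eval (s_gen l i) ?w (s_gen l i v) = rvar v" for v
      using distinct nonzero
      by (auto simp: s_gen_def alph_def fv_def rvar_in_loc loc_add loc_diff loc_uminus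
          loc_divide_rvar loc_eval_add[of "s_gen l i" ?w] loc_eval_diff[of "s_gen l i" ?w]
          loc_eval_uminus[of "s_gen l i" ?w] loc_eval_divide_rvar[of "s_gen l i" ?w] loc_eval_rvar[of "s_gen l i" ?w]
          split: prod.split bool.split)
  qed
qed

lemma pi_gen_nonsingular: "nonsingular (pi_gen l)"
proof (rule nonsingular_if_loc_left_inverse)
  let ?\<tau> = "\<lambda>(b, j). if l < j then rvar (b, j) else rvar (b, (j + l) mod Suc l)"
  show "?\<tau> (True, Suc l) \<noteq> 0"
    by simp
  show "pi_gen l v \<in> loc (True, Suc l)" for v
    by (simp add: pi_gen_def rvar_in_loc split: prod.split)
  show "loc_eval ?\<tau> (True, Suc l) (pi_gen l v) = rvar v" for v
  proof (cases v)
    case (Pair b j)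
    have "j \<le> l \<Longrightarrow> (Suc j mod Suc l + l) mod Suc l = j"
      by (metis add.commute add_Suc_right mod_add_left_eq mod_add_self1 mod_less le_imp_less_Suc plus_1_eq_Suc)
    with Pair show ?thesis
      by (auto simp: pi_gen_def loc_eval_rvar)
  qed
qed

lemma field_hom_s_aut: "2 \<le> l \<Longrightarrow> field_hom (s_aut l i)"
  unfolding s_aut_def by (intro field_hom_subst s_gen_nonsingular)

lemma field_hom_pi_aut: "field_hom (pi_aut l)"
  unfolding pi_aut_def by (intro field_hom_subst pi_gen_nonsingular)

lemma s_aut_alph:
  assumes "2 \<le> l"
  shows "s_aut l i (alph l j) =
    (if j mod Suc l = i mod Suc l then - alph l i
     else if j mod Suc l = (i + 1) mod Suc l \<or> j mod Suc l = (i + l) mod Suc l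
       then alph l j + alph l i
     else alph l j)"
  unfolding s_aut_def
  by (subst (1) alph_def) (auto simp: subst_rvar s_gen_nonsingular[OF assms] s_gen_def alph_def fv_def)

lemma s_aut_fv:
  assumes "2 \<le> l"
  shows "s_aut l i (fv l j) =
    (if j mod Suc l = (i + 1) mod Suc l then fv l j + alph l i / fv l i
     else if j mod Suc l = (i + l) mod Suc l then fv l j - alph l i / fv l i
     else fv l j)"
  unfolding s_aut_def
  by (subst (1) fv_def) (auto simp: subst_rvar s_gen_nonsingular[OF assms] s_gen_def alph_def fv_def)

lemma pi_aut_alph: "pi_aut l (alph l j) = alph l (j + 1)"
  unfolding pi_aut_def
  by (subst (1) alph_def) (simp add: subst_rvar pi_gen_nonsingular pi_gen_def alph_def mod_Suc_eq)

lemma pi_aut_fv: "pi_aut l (fv l j) = fv l (j + 1)"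
  unfolding pi_aut_def
  by (subst (1) fv_def) (simp add: subst_rvar pi_gen_nonsingular pi_gen_def fv_def mod_Suc_eq)

lemma s_aut_alph_offset:
  assumes "2 \<le> l" and "a \<le> l" and "b \<le> l"
  shows "s_aut l (k + a) (alph l (k + b)) =
    (if b = a then - alph l (k + a)
     else if b = a + 1 \<or> (a = l \<and> b = 0) \<or> b + 1 = a \<or> (a = 0 \<and> b = l)
       then alph l (k + b) + alph l (k + a)
     else alph l (k + b))"
  using assms s_aut_alph[of l "k + a" "k + b"] mod_Suc_offset_eq_iff[of a l b k]
    mod_Suc_offset_Suc_iff[of a l b k] mod_Suc_offset_pred_iff[of a l b k]
  by simp

lemma s_aut_fv_offset:
  assumes "2 \<le> l" and "a \<le> l" and "b \<le> l"
  shows "s_aut l (k + a) (fv l (k + b)) =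
    (if b = a + 1 \<or> (a = l \<and> b = 0) then fv l (k + b) + alph l (k + a) / fv l (k + a)
     else if b + 1 = a \<or> (a = 0 \<and> b = l) then fv l (k + b) - alph l (k + a) / fv l (k + a)
     else fv l (k + b))"
  using assms s_aut_fv[of l "k + a" "k + b"]
    mod_Suc_offset_Suc_iff[of a l b k] mod_Suc_offset_pred_iff[of a l b k]
  by simp

section \<open>Products of consecutive reflections\<close>

lemma field_hom_chain: "2 \<le> l \<Longrightarrow> field_hom (chain l k r)"
  by (induction r) (simp_all add: field_hom_id field_hom_comp field_hom_s_aut)

lemma chain_Suc_right: "chain l k (Suc r) = chain l (Suc k) r \<circ> s_aut l (Suc k)"
  by (induction r) (simp_all only: chain.simps comp_assoc add_Suc_right add_Suc add_0_right id_comp comp_id)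

lemma chain_add: "chain l k (a + b) = chain l (k + a) b \<circ> chain l k a"
  by (induction b) (simp_all add: comp_assoc add.assoc)

lemma chain_fixed:
  "(\<And>i. 1 \<le> i \<Longrightarrow> i \<le> r \<Longrightarrow> s_aut l (k + i) x = x) \<Longrightarrow> chain l k r x = x"
proof (induction r)
  case (Suc r)
  then show ?case
    using Suc.prems[of "Suc r"] by simp
qed simp

lemma chain_split_at:
  assumes "2 \<le> j" and "j \<le> l"
  shows "chain l 0 l = chain l j (l - j) \<circ> s_aut l j \<circ> s_aut l (j - 1) \<circ> chain l 0 (j - 2)"
proof -
  have l_eq: "j - 2 + Suc (Suc (l - j)) = l" and "Suc (j - 2) = j - 1" and "Suc (j - 1) = j"
    using assms by simp_all
  then have "chain l (j - 2) (Suc (Suc (l - j))) = chain l j (l - j) \<circ> s_aut l j \<circ> s_aut l (j - 1)"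
    by (simp only: chain_Suc_right comp_assoc)
  moreover have "chain l 0 l = chain l (j - 2) (Suc (Suc (l - j))) \<circ> chain l 0 (j - 2)"
    using chain_add[of l 0 "j - 2" "Suc (Suc (l - j))"] by (simp only: add_0_left l_eq)
  ultimately show ?thesis
    by simp
qed

section \<open>Continued fractions\<close>

fun contfrac :: "(nat \<Rightarrow> 'a::field) \<Rightarrow> (nat \<Rightarrow> 'a) \<Rightarrow> nat \<Rightarrow> 'a" where
  "contfrac a f 0 = a 0 / f 0"
| "contfrac a f (Suc r) =
    (\<Sum>i\<le>Suc r. a i) / (f 0 - contfrac (\<lambda>i. a (Suc i)) (\<lambda>i. f (Suc i)) r)"

lemma cf_eq_contfrac: "cf l k r = contfrac (\<lambda>i. alph l (k + i)) (\<lambda>i. fv l (k + i)) r"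
  by (induction r arbitrary: k) simp_all

lemma contfrac_cong:
  "(\<And>i. i \<le> r \<Longrightarrow> a i = a' i) \<Longrightarrow> (\<And>i. i \<le> r \<Longrightarrow> f i = f' i) \<Longrightarrow>
    contfrac a f r = contfrac a' f' r"
proof (induction r arbitrary: a f a' f')
  case (Suc r)
  have "contfrac (\<lambda>i. a (Suc i)) (\<lambda>i. f (Suc i)) r = contfrac (\<lambda>i. a' (Suc i)) (\<lambda>i. f' (Suc i)) r"
    by (rule Suc.IH) (use Suc.prems in auto)
  moreover have "(\<Sum>i\<le>Suc r. a i) = (\<Sum>i\<le>Suc r. a' i)"
    using Suc.prems(1) by (intro sum.cong) auto
  ultimately show ?case
    using Suc.prems(2)[of 0] by simp
qed simp

lemma field_hom_contfrac:
  "field_hom h \<Longrightarrow> h (contfrac a f r) = contfrac (h \<circ> a) (h \<circ> f) r"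
  by (induction r arbitrary: a f)
     (simp_all add: field_hom_divide field_hom_diff field_hom_sum comp_def del: sum.atMost_Suc)

lemma contfrac_deepen:
  "contfrac (a(r := a r + a (Suc r))) (f(r := f r - a (Suc r) / f (Suc r))) r = contfrac a f (Suc r)"
proof (induction r arbitrary: a f)
  case (Suc r)
  have "(\<Sum>i\<le>Suc r. (a(Suc r := a (Suc r) + a (Suc (Suc r)))) i) = (\<Sum>i\<le>Suc (Suc r). a i)"
    by (simp add: add.assoc)
  with Suc.IH[of "\<lambda>i. a (Suc i)" "\<lambda>i. f (Suc i)"] show ?case
    by (simp del: sum.atMost_Suc add: fun_upd_def)
qed simp

lemma g_eq_contfrac:
  assumes "2 \<le> l" and "r \<le> l - 1"
  shows "g l k r = contfrac (\<lambda>i. alph l (k + i)) (\<lambda>i. fv l (k + i)) r"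
  using assms(2)
proof (induction r)
  case 0
  show ?case
    by (simp add: g_def)
next
  case (Suc r)
  let ?a = "\<lambda>i. alph l (k + i)" and ?f = "\<lambda>i. fv l (k + i)"
  let ?s = "s_aut l (k + Suc r)"
  have "g l k (Suc r) = ?s (contfrac ?a ?f r)"
    using Suc by (simp add: g_def)
  also have "\<dots> = contfrac (?s \<circ> ?a) (?s \<circ> ?f) r"
    by (simp add: field_hom_contfrac field_hom_s_aut assms(1))
  also have "\<dots> = contfrac (?a(r := ?a r + ?a (Suc r))) (?f(r := ?f r - ?a (Suc r) / ?f (Suc r))) r"
  proof (rule contfrac_cong)
    fix i
    assume "i \<le> r"
    then show "(?s \<circ> ?a) i = (?a(r := ?a r + ?a (Suc r))) i"
      and "(?s \<circ> ?f) i = (?f(r := ?f r - ?a (Suc r) / ?f (Suc r))) i"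
      using assms(1) Suc.prems s_aut_alph_offset[of l "Suc r" i k] s_aut_fv_offset[of l "Suc r" i k]
      by auto
  qed
  also have "\<dots> = contfrac ?a ?f (Suc r)"
    by (rule contfrac_deepen)
  finally show ?case .
qed

lemma g_eq_cf: "2 \<le> l \<Longrightarrow> r \<le> l - 1 \<Longrightarrow> g l k r = cf l k r"
  by (simp add: g_eq_contfrac cf_eq_contfrac)

lemma pi_aut_g: "2 \<le> l \<Longrightarrow> r \<le> l - 1 \<Longrightarrow> pi_aut l (g l k r) = g l (Suc k) r"
  by (simp add: g_eq_contfrac field_hom_contfrac field_hom_pi_aut pi_aut_alph pi_aut_fv comp_def)

section \<open>The translation T_1\<close>

lemma chain_fv_self:
  assumes "2 \<le> l" and "1 \<le> r" and "r \<le> l - 1"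
  shows "chain l k r (fv l k) = fv l k - g l (Suc k) (r - 1)"
proof -
  obtain r' where r': "r = Suc r'"
    using assms(2) by (cases r) auto
  have first: "s_aut l (Suc k) (fv l k) = fv l k - alph l (Suc k) / fv l (Suc k)"
    using s_aut_fv_offset[of l 1 0 k] assms(1) by simp
  have fixed: "chain l (Suc k) r' (fv l k) = fv l k"
  proof (rule chain_fixed)
    fix i
    assume "1 \<le> i" and "i \<le> r'"
    then have "i \<noteq> 0" and "Suc i < l"
      using assms r' by linarith+
    then show "s_aut l (Suc k + i) (fv l k) = fv l k"
      using s_aut_fv_offset[of l "Suc i" 0 k] assms(1) by simp
  qed
  have "chain l k r (fv l k) = chain l (Suc k) r' (fv l k - alph l (Suc k) / fv l (Suc k))"
    by (simp only: r' chain_Suc_right comp_apply first)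
  also have "\<dots> = fv l k - g l (Suc k) r'"
    by (simp add: field_hom_diff[OF field_hom_chain[OF assms(1)]] fixed g_def)
  finally show ?thesis
    by (simp add: r')
qed

lemma chain_fv_full:
  assumes "2 \<le> l" and "2 \<le> j" and "j \<le> l"
  shows "chain l 0 l (fv l j) = chain l j (l - j) (fv l j) + g l (j - 1) (l - j + 1)"
proof -
  have below: "chain l 0 (j - 2) (fv l j) = fv l j"
  proof (rule chain_fixed)
    fix i
    assume "1 \<le> i" and "i \<le> j - 2"
    then have "i \<noteq> 0" and "i \<le> l" and "j \<noteq> i + 1" and "j + 1 \<noteq> i"
      using assms by linarith+
    then show "s_aut l (0 + i) (fv l j) = fv l j"
      using s_aut_fv_offset[of l i j 0] assms by simp
  qed
  have left: "s_aut l (j - 1) (fv l j) = fv l j + alph l (j - 1) / fv l (j - 1)"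
    using s_aut_fv_offset[of l "j - 1" j 0] assms by simp
  have self: "s_aut l j (fv l j) = fv l j"
    using s_aut_fv_offset[of l j j 0] assms by simp
  have shift: "chain l (j - 1) (l - j + 1) x = chain l j (l - j) (s_aut l j x)" for x
    using chain_Suc_right[of l "j - 1" "l - j"] assms by simp
  have "chain l 0 l (fv l j) = chain l j (l - j) (s_aut l j (fv l j + alph l (j - 1) / fv l (j - 1)))"
    by (simp only: chain_split_at[OF assms(2,3)] comp_apply below left)
  also have "\<dots> = chain l j (l - j) (fv l j) + g l (j - 1) (l - j + 1)"
    by (simp only: g_def shift self field_hom_add[OF field_hom_s_aut[OF assms(1)]]
        field_hom_add[OF field_hom_chain[OF assms(1)]])
  finally show ?thesis .
qed

lemma sum_alph_cycle: "(\<Sum>i\<le>l. alph l (k + i)) = delta l"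
proof (induction k)
  case 0
  show ?case
    by (simp add: delta_def)
next
  case (Suc k)
  have "alph l (k + Suc l) = alph l k"
    by (metis alph_mod mod_add_self2)
  then have "(\<Sum>i\<le>l. alph l (Suc k + i)) = (\<Sum>i\<le>l. alph l (k + i))"
    using sum.atMost_Suc_shift[of "\<lambda>i. alph l (k + i)" l] by simp
  with Suc.IH show ?case
    by simp
qed

lemma pi_aut_delta: "pi_aut l (delta l) = delta l"
proof -
  have "pi_aut l (delta l) = (\<Sum>i\<le>l. alph l (1 + i))"
    by (simp add: delta_def field_hom_sum[OF field_hom_pi_aut] pi_aut_alph)
  also have "\<dots> = delta l"
    by (rule sum_alph_cycle)
  finally show ?thesis .
qed

lemma chain_alph_self:
  assumes "2 \<le> l" and "r \<le> l - 1"
  shows "chain l k r (alph l k) = (\<Sum>i\<le>r. alph l (k + i))"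
  using assms(2)
proof (induction r)
  case (Suc r)
  have "s_aut l (k + Suc r) (alph l (k + i)) = alph l (k + i) + (if i = r then alph l (k + Suc r) else 0)"
    if "i \<le> r" for i
    using s_aut_alph_offset[of l "Suc r" i k] assms(1) Suc.prems that by auto
  with Suc show ?case
    by (simp add: field_hom_sum[OF field_hom_s_aut[OF assms(1)]] sum.distrib)
qed simp

lemma alph_Suc_self [simp]: "alph l (Suc l) = alph l 0"
  and fv_Suc_self [simp]: "fv l (Suc l) = fv l 0"
  by (simp_all add: alph_def fv_def)

lemma T1_eq_last: "2 \<le> l \<Longrightarrow> T1 l = pi_aut l \<circ> s_aut l l \<circ> chain l 0 (l - 1)"
  using chain.simps(2)[of l 0 "l - 1"] by (simp add: T1_def comp_assoc)

lemma T1_eq_first: "2 \<le> l \<Longrightarrow> T1 l = pi_aut l \<circ> chain l 1 (l - 1) \<circ> s_aut l 1"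
  using chain_Suc_right[of l 0 "l - 1"] by (simp add: T1_def comp_assoc)

lemma T1_fv_0:
  assumes "2 \<le> l"
  shows "T1 l (fv l 0) = fv l 1 - g l 2 (l - 1) + g l 0 0"
proof -
  have "chain l 0 (l - 1) (fv l 0) = fv l 0 - g l 1 (l - 2)"
    using chain_fv_self[OF assms, of "l - 1" 0] assms by (simp add: numeral_2_eq_2)
  moreover have "s_aut l l (fv l 0) = fv l 0 + alph l l / fv l l"
    using s_aut_fv_offset[of l l 0 0] assms by simp
  moreover have "s_aut l l (g l 1 (l - 2)) = g l 1 (l - 1)"
    using chain.simps(2)[of l 1 "l - 2"] assms by (simp add: g_def numeral_2_eq_2 Suc_diff_Suc)
  ultimately have "T1 l (fv l 0) = pi_aut l (fv l 0 + alph l l / fv l l - g l 1 (l - 1))"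
    by (simp add: T1_eq_last[OF assms] field_hom_diff[OF field_hom_s_aut[OF assms]])
  also have "\<dots> = fv l 1 + alph l 0 / fv l 0 - g l 2 (l - 1)"
    using pi_aut_g[OF assms, of "l - 1" 1]
    by (simp add: field_hom_diff[OF field_hom_pi_aut] field_hom_add[OF field_hom_pi_aut]
 field_hom_divide[OF field_hom_pi_aut] pi_aut_alph pi_aut_fv numeral_2_eq_2)
  finally show ?thesis
    by (simp add: g_def)
qed

lemma T1_fv_1:
  assumes "2 \<le> l"
  shows "T1 l (fv l 1) = fv l 2 - g l 3 (l - 2)"
proof -
  have "s_aut l 1 (fv l 1) = fv l 1"
    using s_aut_fv_offset[of l 1 1 0] assms by simp
  moreover have "chain l 1 (l - 1) (fv l 1) = fv l 1 - g l 2 (l - 2)"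
    using chain_fv_self[OF assms, of "l - 1" 1] assms by (simp add: numeral_2_eq_2)
  moreover have "pi_aut l (g l 2 (l - 2)) = g l 3 (l - 2)"
    using pi_aut_g[OF assms, of "l - 2" 2] by (simp add: numeral_3_eq_3)
  ultimately show ?thesis
    by (simp add: T1_eq_first[OF assms] field_hom_diff[OF field_hom_pi_aut] pi_aut_fv numeral_2_eq_2)
qed

lemma T1_fv_middle:
  assumes "2 \<le> l" and "2 \<le> j" and "j \<le> l - 1"
  shows "T1 l (fv l j) = fv l (j + 1) - g l (j + 2) (l - 1 - j) + g l j (l + 1 - j)"
proof -
  have "chain l j (l - j) (fv l j) = fv l j - g l (Suc j) (l - 1 - j)"
    using chain_fv_self[OF assms(1), of "l - j" j] assms by simp
  then have "T1 l (fv l j) = pi_aut l (fv l j - g l (Suc j) (l - 1 - j) + g l (j - 1) (l - j + 1))"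
    using chain_fv_full[OF assms(1,2)] assms(3) by (simp add: T1_def)
  also have "\<dots> = fv l (j + 1) - g l (Suc (Suc j)) (l - 1 - j) + g l (Suc (j - 1)) (l - j + 1)"
    using pi_aut_g[OF assms(1), of "l - 1 - j" "Suc j"] pi_aut_g[OF assms(1), of "l - j + 1" "j - 1"] assms
    by (simp add: field_hom_diff[OF field_hom_pi_aut] field_hom_add[OF field_hom_pi_aut] pi_aut_fv)
  also have "\<dots> = fv l (j + 1) - g l (j + 2) (l - 1 - j) + g l j (l + 1 - j)"
    using assms by (simp add: Suc_diff_le)
  finally show ?thesis .
qed

lemma T1_fv_l:
  assumes "2 \<le> l"
  shows "T1 l (fv l l) = fv l 0 + g l l 1"
proof -
  have "T1 l (fv l l) = pi_aut l (fv l l + g l (l - 1) 1)"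
    using chain_fv_full[OF assms assms order_refl] by (simp add: T1_def)
  also have "\<dots> = fv l 0 + g l l 1"
    using pi_aut_g[OF assms, of 1 "l - 1"] assms by (simp add: field_hom_add[OF field_hom_pi_aut] pi_aut_fv)
  finally show ?thesis .
qed

lemma T1_alph_0:
  assumes "2 \<le> l"
  shows "T1 l (alph l 0) = alph l 0 + delta l"
proof -
  have l: "Suc (l - 1) = l"
    using assms by simp
  have "delta l = (\<Sum>i\<le>Suc (l - 1). alph l i)"
    using sum_alph_cycle[of l 0] by (simp only: l add_0_left)
  then have cycle: "delta l = (\<Sum>i\<le>l - 1. alph l i) + alph l l"
    by (simp only: sum.atMost_Suc) (simp only: l)
  have "s_aut l l (alph l i) =
      alph l i + (if i = 0 then alph l l else 0) + (if i = l - 1 then alph l l else 0)"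
    if "i \<le> l - 1" for i
    using s_aut_alph_offset[of l l i 0] assms that by auto
  then have "s_aut l l (\<Sum>i\<le>l - 1. alph l i) = (\<Sum>i\<le>l - 1. alph l i) + alph l l + alph l l"
    using assms by (simp add: field_hom_sum[OF field_hom_s_aut[OF assms]] sum.distrib)
  then have "s_aut l l (chain l 0 (l - 1) (alph l 0)) = delta l + alph l l"
    using chain_alph_self[OF assms, of "l - 1" 0] cycle by simp
  then show ?thesis
    by (simp add: T1_eq_last[OF assms] field_hom_add[OF field_hom_pi_aut] pi_aut_delta pi_aut_alph
 add.commute)
qed

lemma T1_alph_1:
  assumes "2 \<le> l"
  shows "T1 l (alph l 1) = alph l 1 - delta l"
proof -
  have l: "Suc (l - 1) = l" and "2 + Suc (l - 1) = 1 + Suc l"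
    using assms by simp_all
  then have "alph l (2 + Suc (l - 1)) = alph l 1"
    by (metis alph_mod mod_add_self2)
  moreover have "delta l = (\<Sum>i\<le>Suc (l - 1). alph l (2 + i))"
    using sum_alph_cycle[of l 2] by (simp only: l)
  ultimately have "delta l = (\<Sum>i\<le>l - 1. alph l (2 + i)) + alph l 1"
    by (simp only: sum.atMost_Suc)
  then have cycle: "(\<Sum>i\<le>l - 1. alph l (2 + i)) = delta l - alph l 1"
    by simp
  have "s_aut l 1 (alph l 1) = - alph l 1"
    using s_aut_alph_offset[of l 1 1 0] assms by simp
  then have "T1 l (alph l 1) = pi_aut l (- (\<Sum>i\<le>l - 1. alph l (1 + i)))"
    using chain_alph_self[OF assms, of "l - 1" 1]
    by (simp only: T1_eq_first[OF assms] comp_apply field_hom_uminus[OF field_hom_chain[OF assms]])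
  also have "\<dots> = - (\<Sum>i\<le>l - 1. alph l (2 + i))"
    by (simp add: field_hom_uminus[OF field_hom_pi_aut] field_hom_sum[OF field_hom_pi_aut] pi_aut_alph)
  finally show ?thesis
    using cycle by simp
qed

lemma T1_alph_fixed:
  assumes "2 \<le> l" and "2 \<le> j" and "j \<le> l"
  shows "T1 l (alph l j) = alph l j"
proof -
  have below: "chain l 0 (j - 2) (alph l j) = alph l j"
  proof (rule chain_fixed)
    fix i
    assume "1 \<le> i" and "i \<le> j - 2"
    then have "i \<noteq> 0" and "i \<le> l" and "j \<noteq> i" and "j \<noteq> i + 1" and "j + 1 \<noteq> i"
      using assms by linarith+
    then show "s_aut l (0 + i) (alph l j) = alph l j"
      using s_aut_alph_offset[of l i j 0] assms by simp
  qed
  have j: "j - 1 \<noteq> j" and "j - 1 + 1 = j" and "j - 1 \<le> l" and "j - 1 \<noteq> 0"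
    using assms by linarith+
  then have "s_aut l (j - 1) (alph l j) = alph l j + alph l (j - 1)"
    using s_aut_alph_offset[of l "j - 1" j 0] assms by simp
  then have across: "s_aut l j (s_aut l (j - 1) (alph l j)) = alph l (j - 1)"
    using s_aut_alph_offset[of l j j 0] s_aut_alph_offset[of l j "j - 1" 0] assms j
    by (simp add: field_hom_add[OF field_hom_s_aut[OF assms(1)]])
  have above: "chain l j (l - j) (alph l (j - 1)) = alph l (j - 1)"
  proof (rule chain_fixed)
    fix i
    assume "1 \<le> i" and "i \<le> l - j"
    then have "j + i \<le> l" and "j - 1 \<noteq> j + i" and "j - 1 \<noteq> j + i + 1" and "j - 1 + 1 \<noteq> j + i"
      and "j - 1 \<noteq> 0"
      using assms by linarith+
    then show "s_aut l (j + i) (alph l (j - 1)) = alph l (j - 1)"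
      using s_aut_alph_offset[of l "j + i" "j - 1" 0] assms by auto
  qed
  show ?thesis
    using assms(2)
    by (simp only: T1_def chain_split_at[OF assms(2,3)] comp_apply below across above pi_aut_alph)
       simp
qed

theorem mainTheorem5:
  fixes l :: nat
  assumes "2 \<le> l"
  shows "(\<forall>k r. k \<le> l \<and> r \<le> l - 1 \<longrightarrow> g l k r = cf l k r)
    \<and> T1 l (fv l 0) = fv l 1 - g l 2 (l - 1) + g l 0 0
    \<and> T1 l (fv l 1) = fv l 2 - g l 3 (l - 2)
    \<and> (\<forall>j. 2 \<le> j \<and> j \<le> l - 1 \<longrightarrow>
          T1 l (fv l j) = fv l (j + 1) - g l (j + 2) (l - 1 - j) + g l j (l + 1 - j))
    \<and> T1 l (fv l l) = fv l 0 + g l l 1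
    \<and> T1 l (alph l 0) = alph l 0 + delta l
    \<and> T1 l (alph l 1) = alph l 1 - delta l
    \<and> (\<forall>j. 2 \<le> j \<and> j \<le> l \<longrightarrow> T1 l (alph l j) = alph l j)"
  using assms g_eq_cf T1_fv_0 T1_fv_1 T1_fv_middle T1_fv_l T1_alph_0 T1_alph_1 T1_alph_fixed
  by (intro conjI allI impI) auto

end
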